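(* Let $\{\varphi_n\}$ and $\{\psi_n\}$ be biorthogonal sequences in a Hilbert space $\mathcal H$ and let $\mathcal D$ be a dense subspace of $\mathcal H$ such that $D_\varphi\cup D_\psi\subseteq\mathcal D\subseteq D(\varphi)\cap D(\psi)$. Then the following are equivalent: (i) $(\{\varphi_n\},\{\psi_n\})$ is a $\mathcal D$-quasi basis, i.e. $\sum_{k=0}^\infty\langle x,\varphi_k\rangle\langle\psi_k,y\rangle=\langle x,y\rangle$ for all $x,y\in\mathcal D$. (ii) For any ONB $\{e_n\}$ of $\mathcal H$, $\{\varphi_n\}$ is a generalized Riesz system with a natural constructing pair $(\{e_n\},T)$ satisfying $D(T^* )\cap D(T^{-1})\supseteq\mathcal D$. (iii) For any ONB $\{e_n\}$ of $\mathcal H$, $\{\psi_n\}$ is a generalized Riesz system with a natural constructing pair $(\{e_n\},K)$ satisfying $D(K^* )\cap D(K^{-1})\supseteq\mathcal D$. If (i) holds, then one can take $T=(\overline{T_{e,\psi}|_{\mathcal D}})^{-1}$ in (ii) and $K=(\overline{T_{e,\varphi}|_{\mathcal D}})^{-1}$ in (iii).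
   Context: Inner product $\langle\cdot,\cdot\rangle$ is linear in the first argument. Biorthogonal: $\langle\varphi_n,\psi_m\rangle=\delta_{nm}$. $D_\varphi$, $D_\psi$ are the linear spans of $\{\varphi_n\}$, $\{\psi_n\}$. $D(\varphi)=\{x:\sum_n|\langle x,\varphi_n\rangle|^2<\infty\}$, similarly $D(\psi)$. A sequence $\{\varphi_n\}$ is a generalized Riesz system if there exist an ONB $\{e_n\}$ and a densely defined closed operator $T$ with densely defined inverse such that $e_n\in D(T)\cap D((T^{-1})^* )$ and $Te_n=\varphi_n$ for all $n$; $(\{e_n\},T)$ is a constructing pair. It is natural for $(\{\varphi_n\},\{\psi_n\})$ if $\psi_n=(T^{-1})^*e_n$ for all $n$ (analogously a constructing pair $(\{e_n\},K)$ for $\{\psi_n\}$ is natural if $\varphi_n=(K^{-1})^*e_n$). $T_{e,\varphi}$ is the operator with domain $D(\varphi)$, $T_{e,\varphi}x=\sum_n\langle x,\varphi_n\rangle e_n$; similarly $T_{e,\psi}$ on $D(\psi)$. Bars denote closures, $|_{\mathcal D}$ restrictions. *)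

theory Defs
  imports Complex_Main
begin

text \<open>A complex inner product space (inner product linear in the first argument)
  which is complete w.r.t. the induced norm.\<close>

class complex_hilbert = ab_group_add +
  fixes scaleC :: "complex \<Rightarrow> 'a \<Rightarrow> 'a" (infixr \<open>*\<^sub>C\<close> 75)
    and cinner :: "'a \<Rightarrow> 'a \<Rightarrow> complex"
  assumes scaleC_add_right: "a *\<^sub>C (x + y) = a *\<^sub>C x + a *\<^sub>C y"
    and scaleC_add_left: "(a + b) *\<^sub>C x = a *\<^sub>C x + b *\<^sub>C x"
    and scaleC_scaleC: "a *\<^sub>C (b *\<^sub>C x) = (a * b) *\<^sub>C x"
    and scaleC_one: "1 *\<^sub>C x = x"
    and cinner_add_left: "cinner (x + y) z = cinner x z + cinner y z"
    and cinner_scaleC_left: "cinner (a *\<^sub>C x) y = a * cinner x y"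
    and cinner_conj_sym: "cinner y x = cnj (cinner x y)"
    and cinner_nonneg: "0 \<le> Re (cinner x x)"
    and cinner_eq_zero: "cinner x x = 0 \<Longrightarrow> x = 0"
    and hilbert_complete:
      "(\<forall>e>0. \<exists>N. \<forall>m\<ge>N. \<forall>n\<ge>N. sqrt (Re (cinner (X m - X n) (X m - X n))) < e)
        \<Longrightarrow> (\<exists>L. (\<lambda>n. sqrt (Re (cinner (X n - L) (X n - L)))) \<longlonglongrightarrow> 0)"

definition cnorm :: "'a::complex_hilbert \<Rightarrow> real" where
  "cnorm x = sqrt (Re (cinner x x))"

definition hclosure :: "'a::complex_hilbert set \<Rightarrow> 'a set" where
  "hclosure S = {x. \<forall>e>0. \<exists>y\<in>S. cnorm (x - y) < e}"

definition hdense :: "'a::complex_hilbert set \<Rightarrow> bool" where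
  "hdense S \<longleftrightarrow> hclosure S = UNIV"

definition csubspace :: "'a::complex_hilbert set \<Rightarrow> bool" where
  "csubspace S \<longleftrightarrow> 0 \<in> S \<and> (\<forall>x\<in>S. \<forall>y\<in>S. x + y \<in> S) \<and> (\<forall>a. \<forall>x\<in>S. a *\<^sub>C x \<in> S)"

definition seq_span :: "(nat \<Rightarrow> 'a::complex_hilbert) \<Rightarrow> 'a set" where
  "seq_span f = {x. \<exists>F c. finite F \<and> x = (\<Sum>i\<in>F. c i *\<^sub>C f i)}"

definition seq_dom :: "(nat \<Rightarrow> 'a::complex_hilbert) \<Rightarrow> 'a set" where
  "seq_dom f = {x. summable (\<lambda>n. (cmod (cinner x (f n)))\<^sup>2)}"

definition biorthogonal :: "(nat \<Rightarrow> 'a::complex_hilbert) \<Rightarrow> (nat \<Rightarrow> 'a) \<Rightarrow> bool" where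
  "biorthogonal \<phi> \<psi> \<longleftrightarrow> (\<forall>n m. cinner (\<phi> n) (\<psi> m) = (if n = m then 1 else 0))"

definition ONB :: "(nat \<Rightarrow> 'a::complex_hilbert) \<Rightarrow> bool" where
  "ONB e \<longleftrightarrow> (\<forall>n m. cinner (e n) (e m) = (if n = m then 1 else 0)) \<and> hdense (seq_span e)"

definition quasi_basis :: "'a::complex_hilbert set \<Rightarrow> (nat \<Rightarrow> 'a) \<Rightarrow> (nat \<Rightarrow> 'a) \<Rightarrow> bool" where
  "quasi_basis D \<phi> \<psi> \<longleftrightarrow>
     (\<forall>x\<in>D. \<forall>y\<in>D. (\<lambda>k. cinner x (\<phi> k) * cinner (\<psi> k) y) sums cinner x y)"

text \<open>An operator \<open>T\<close> is identified with its graph \<open>G \<subseteq> H \<times> H\<close>; \<open>(x, y) \<in> G\<close> means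
  \<open>x \<in> D(T)\<close> and \<open>T x = y\<close>. \<open>D(T) = Domain G\<close>, range \<open>= Range G\<close>,
  the inverse is the converse graph, restriction to \<open>D\<close> is \<open>G \<inter> (D \<times> UNIV)\<close>.\<close>

definition is_operator :: "('a::complex_hilbert \<times> 'a) set \<Rightarrow> bool" where
  "is_operator G \<longleftrightarrow>
     (\<forall>x y z. (x, y) \<in> G \<longrightarrow> (x, z) \<in> G \<longrightarrow> y = z) \<and>
     (0, 0) \<in> G \<and>
     (\<forall>x y u v. (x, y) \<in> G \<longrightarrow> (u, v) \<in> G \<longrightarrow> (x + u, y + v) \<in> G) \<and>
     (\<forall>a x y. (x, y) \<in> G \<longrightarrow> (a *\<^sub>C x, a *\<^sub>C y) \<in> G)"

definition graph_closure :: "('a::complex_hilbert \<times> 'a) set \<Rightarrow> ('a \<times> 'a) set" where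
  "graph_closure G = {(x, y). \<forall>e>0. \<exists>(u, v)\<in>G. cnorm (x - u) < e \<and> cnorm (y - v) < e}"

definition closed_operator :: "('a::complex_hilbert \<times> 'a) set \<Rightarrow> bool" where
  "closed_operator G \<longleftrightarrow> is_operator G \<and> graph_closure G = G"

definition densely_defined :: "('a::complex_hilbert \<times> 'a) set \<Rightarrow> bool" where
  "densely_defined G \<longleftrightarrow> is_operator G \<and> hdense (Domain G)"

definition adjoint :: "('a::complex_hilbert \<times> 'a) set \<Rightarrow> ('a \<times> 'a) set" where
  "adjoint G = {(y, z). \<forall>(x, w)\<in>G. cinner w y = cinner x z}"

definition constructing_pair ::
    "(nat \<Rightarrow> 'a::complex_hilbert) \<Rightarrow> ('a \<times> 'a) set \<Rightarrow> (nat \<Rightarrow> 'a) \<Rightarrow> bool" where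
  "constructing_pair e T \<phi> \<longleftrightarrow>
     ONB e \<and> closed_operator T \<and> densely_defined T \<and> densely_defined (converse T) \<and>
     (\<forall>n. (e n, \<phi> n) \<in> T \<and> e n \<in> Domain (adjoint (converse T)))"

definition generalized_Riesz :: "(nat \<Rightarrow> 'a::complex_hilbert) \<Rightarrow> bool" where
  "generalized_Riesz \<phi> \<longleftrightarrow> (\<exists>e T. constructing_pair e T \<phi>)"

text \<open>A constructing pair \<open>({e_n}, T)\<close> of \<open>{\<phi>_n}\<close> is natural for \<open>({\<phi>_n},{\<psi>_n})\<close> if
  \<open>\<psi>_n = (T\<^sup>-\<^sup>1)\<^sup>* e_n\<close>.  (The same definition with the roles of the sequences exchanged
  gives naturality of a constructing pair \<open>({e_n}, K)\<close> of \<open>{\<psi>_n}\<close>.)\<close>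
definition natural_pair ::
    "(nat \<Rightarrow> 'a::complex_hilbert) \<Rightarrow> ('a \<times> 'a) set \<Rightarrow> (nat \<Rightarrow> 'a) \<Rightarrow> (nat \<Rightarrow> 'a) \<Rightarrow> bool" where
  "natural_pair e T \<phi> \<psi> \<longleftrightarrow>
     constructing_pair e T \<phi> \<and> (\<forall>n. (e n, \<psi> n) \<in> adjoint (converse T))"

definition T_seq :: "(nat \<Rightarrow> 'a::complex_hilbert) \<Rightarrow> (nat \<Rightarrow> 'a) \<Rightarrow> ('a \<times> 'a) set" where
  "T_seq e \<phi> = {(x, y). x \<in> seq_dom \<phi> \<and>
      (\<lambda>n. cnorm ((\<Sum>k<n. cinner x (\<phi> k) *\<^sub>C e k) - y)) \<longlonglongrightarrow> 0}"

definition restrict_op :: "('a \<times> 'a) set \<Rightarrow> 'a set \<Rightarrow> ('a \<times> 'a) set" where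
  "restrict_op G D = G \<inter> (D \<times> UNIV)"

end

theory Submission
  imports Defs
begin

text \<open>
  For (ii) \<open>\<Rightarrow>\<close> (i), let \<open>x, y \<in> \<D>\<close>, \<open>x \<in> D(T\<^sup>*)\<close> and \<open>y = T w\<close>.  Then
  \<open>\<langle>x,\<phi>\<^sub>k\<rangle> = \<langle>T\<^sup>*x,e\<^sub>k\<rangle>\<close> and, by naturality, \<open>\<langle>\<psi>\<^sub>k,y\<rangle> = \<langle>e\<^sub>k,w\<rangle>\<close>, so the quasi-basis
  series is Parseval's identity for \<open>\<langle>T\<^sup>*x,w\<rangle> = \<langle>x,y\<rangle>\<close>.

  For (i) \<open>\<Rightarrow>\<close> (ii), let \<open>S = T\<^sub>e\<^sub>,\<^sub>\<psi>|\<^sub>\<D>\<close>.  By construction \<open>(e\<^sub>n, \<psi>\<^sub>n) \<in> S\<^sup>*\<close>, and the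
  quasi-basis identity says precisely that \<open>(T\<^sub>e\<^sub>,\<^sub>\<phi> y, y) \<in> S\<^sup>*\<close> for \<open>y \<in> \<D>\<close>.  Thus
  both the domain and the range of \<open>S\<^sup>* = S\<^bsub>cl\<^esub>\<^sup>*\<close> are total (only \<open>0\<close> is orthogonal to
  them), which makes the closure \<open>S\<^bsub>cl\<^esub>\<close> single-valued and injective; hence
  \<open>T = S\<^bsub>cl\<^esub>\<^sup>-\<^sup>1\<close> is a closed operator, with \<open>D(T\<^sup>*) = R(S\<^sup>*) \<supseteq> \<D>\<close>.  Biorthogonality gives
  \<open>S \<phi>\<^sub>n = e\<^sub>n\<close>, i.e. \<open>T e\<^sub>n = \<phi>\<^sub>n\<close>.  Statement (iii) is (ii) with the roles of \<open>\<phi>\<close> and \<open>\<psi>\<close>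
  exchanged, since the quasi-basis property is symmetric.
\<close>

section \<open>Inner product and norm\<close>

lemma cinner_zero_left [simp]: "cinner 0 (y::'a::complex_hilbert) = 0"
  using cinner_add_left[of "0::'a" 0 y] by simp

lemma cinner_minus_left: "cinner (- x) (y::'a::complex_hilbert) = - cinner x y"
  using cinner_add_left[of x "-x" y] by (simp add: eq_neg_iff_add_eq_0 add.commute)

lemma cinner_diff_left: "cinner (x - z) (y::'a::complex_hilbert) = cinner x y - cinner z y"
  using cinner_add_left[of x "-z" y] by (simp add: cinner_minus_left)

lemma cinner_add_right: "cinner x (y + z::'a::complex_hilbert) = cinner x y + cinner x z"
  by (metis cinner_add_left cinner_conj_sym complex_cnj_add)

lemma cinner_zero_right [simp]: "cinner x (0::'a::complex_hilbert) = 0"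
  by (metis cinner_conj_sym cinner_zero_left complex_cnj_zero)

lemma cinner_minus_right: "cinner x (- y::'a::complex_hilbert) = - cinner x y"
  by (metis cinner_conj_sym cinner_minus_left complex_cnj_minus)

lemma cinner_diff_right: "cinner x (y - z::'a::complex_hilbert) = cinner x y - cinner x z"
  by (metis cinner_conj_sym cinner_diff_left complex_cnj_diff)

lemma cinner_scaleC_right: "cinner x (a *\<^sub>C y::'a::complex_hilbert) = cnj a * cinner x y"
  by (metis cinner_conj_sym cinner_scaleC_left complex_cnj_mult)

lemma cinner_sum_left: "cinner (\<Sum>i\<in>A. f i) (y::'a::complex_hilbert) = (\<Sum>i\<in>A. cinner (f i) y)"
  by (induction A rule: infinite_finite_induct) (auto simp: cinner_add_left)

lemma cinner_sum_right: "cinner y (\<Sum>i\<in>A. f i::'a::complex_hilbert) = (\<Sum>i\<in>A. cinner y (f i))"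
  by (induction A rule: infinite_finite_induct) (auto simp: cinner_add_right)

lemma scaleC_zero_right [simp]: "a *\<^sub>C (0::'a::complex_hilbert) = 0"
  using scaleC_add_right[of a "0::'a" 0] by simp

lemma scaleC_zero_left [simp]: "0 *\<^sub>C (x::'a::complex_hilbert) = 0"
  using scaleC_add_left[of 0 0 x] by simp

lemma scaleC_minus_left: "(- a) *\<^sub>C (x::'a::complex_hilbert) = - (a *\<^sub>C x)"
  using scaleC_add_left[of a "-a" x] by (simp add: eq_neg_iff_add_eq_0 add.commute)

lemma scaleC_minus_right: "a *\<^sub>C (- x::'a::complex_hilbert) = - (a *\<^sub>C x)"
  using scaleC_add_right[of a x "-x"] by (simp add: eq_neg_iff_add_eq_0 add.commute)

lemma scaleC_diff_right: "a *\<^sub>C (x - y::'a::complex_hilbert) = a *\<^sub>C x - a *\<^sub>C y"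
  using scaleC_add_right[of a x "-y"] by (simp add: scaleC_minus_right)

lemma scaleC_diff_left: "(a - b) *\<^sub>C (x::'a::complex_hilbert) = a *\<^sub>C x - b *\<^sub>C x"
  using scaleC_add_left[of a "-b" x] by (simp add: scaleC_minus_left)

lemma cinner_self_real: "cinner x (x::'a::complex_hilbert) = complex_of_real (Re (cinner x x))"
proof -
  have "Im (cinner x x) = Im (cnj (cinner x x))" using cinner_conj_sym[of x x] by simp
  then show ?thesis by (simp add: complex_eq_iff)
qed

lemma cnorm_nonneg [simp]: "0 \<le> cnorm x"
  by (simp add: cnorm_def cinner_nonneg)

lemma cnorm_sq: "(cnorm x)\<^sup>2 = Re (cinner x x)"
  by (simp add: cnorm_def cinner_nonneg)

lemma cnorm_zero[simp]: "cnorm (0::'a::complex_hilbert) = 0"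
  by (simp add: cnorm_def)

lemma cnorm_eq_0[simp]: "cnorm x = 0 \<longleftrightarrow> x = (0::'a::complex_hilbert)"
proof
  assume "cnorm x = 0"
  then have "Re (cinner x x) = 0" using cnorm_sq[of x] by simp
  then have "cinner x x = 0" using cinner_self_real[of x] by simp
  then show "x = 0" by (rule cinner_eq_zero)
qed simp

lemma cnorm_minus: "cnorm (- x::'a::complex_hilbert) = cnorm x"
  by (simp add: cnorm_def cinner_minus_left cinner_minus_right)

lemma cnorm_minus_commute: "cnorm (x - y::'a::complex_hilbert) = cnorm (y - x)"
  by (metis cnorm_minus minus_diff_eq)

lemma cnorm_scaleC: "cnorm (a *\<^sub>C x::'a::complex_hilbert) = cmod a * cnorm x"
proof -
  have "cinner (a *\<^sub>C x) (a *\<^sub>C x) = (a * cnj a) * cinner x x"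
    by (simp add: cinner_scaleC_left cinner_scaleC_right)
  also have "a * cnj a = complex_of_real ((cmod a)\<^sup>2)"
    using complex_norm_square[of a] by simp
  finally have "Re (cinner (a *\<^sub>C x) (a *\<^sub>C x)) = (cmod a)\<^sup>2 * Re (cinner x x)"
    by (subst (asm) cinner_self_real) (simp del: of_real_power)
  then show ?thesis by (simp add: cnorm_def real_sqrt_mult)
qed

lemma cauchy_schwarz: "cmod (cinner x y) \<le> cnorm x * cnorm (y::'a::complex_hilbert)"
proof (cases "y = 0")
  case True then show ?thesis by simp
next
  case False
  define r where "r = Re (cinner y y)"
  have yy: "cinner y y = complex_of_real r" unfolding r_def by (rule cinner_self_real)
  have "r \<noteq> 0" using False yy cinner_eq_zero by force
  moreover have "r \<ge> 0" unfolding r_def by (rule cinner_nonneg)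
  ultimately have r: "r > 0" by simp
  define c where "c = cinner x y"
  define t where "t = c / complex_of_real r"
  have yx: "cinner y x = cnj c" unfolding c_def by (rule cinner_conj_sym)
  \<comment> \<open>\<open>x - t y\<close> is the component of \<open>x\<close> orthogonal to \<open>y\<close>.\<close>
  have "cinner (x - t *\<^sub>C y) (x - t *\<^sub>C y)
        = cinner x x - cnj t * c - t * cnj c + t * cnj t * cinner y y"
    by (simp add: cinner_diff_left cinner_diff_right cinner_scaleC_left cinner_scaleC_right
        yx c_def[symmetric] algebra_simps)
  also have "\<dots> = cinner x x - c * cnj c / complex_of_real r"
    using r by (simp add: t_def yy field_simps)
  also have "c * cnj c = complex_of_real ((cmod c)\<^sup>2)"
    using complex_norm_square[of c] by simp
  finally have "Re (cinner (x - t *\<^sub>C y) (x - t *\<^sub>C y)) = Re (cinner x x) - (cmod c)\<^sup>2 / r"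
    by (simp del: of_real_power add: Re_divide_of_real)
  with cinner_nonneg[of "x - t *\<^sub>C y"] have "(cmod c)\<^sup>2 / r \<le> Re (cinner x x)" by simp
  then have "(cmod c)\<^sup>2 \<le> Re (cinner x x) * r" using r by (simp add: divide_le_eq)
  also have "\<dots> = (cnorm x * cnorm y)\<^sup>2" by (simp add: power_mult_distrib cnorm_sq r_def)
  finally show ?thesis unfolding c_def
    by (meson cnorm_nonneg mult_nonneg_nonneg power2_le_imp_le)
qed

lemma cnorm_triangle: "cnorm (x + y) \<le> cnorm x + cnorm (y::'a::complex_hilbert)"
proof -
  have "Re (cinner x y) \<le> cnorm x * cnorm y"
    using cauchy_schwarz[of x y] complex_Re_le_cmod[of "cinner x y"] by linarith
  moreover have "Re (cinner y x) = Re (cinner x y)" using cinner_conj_sym[of y x] by simp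
  moreover have "Re (cinner (x + y) (x + y))
      = Re (cinner x x) + Re (cinner y y) + Re (cinner x y) + Re (cinner y x)"
    by (simp add: cinner_add_left cinner_add_right)
  ultimately have "(cnorm (x + y))\<^sup>2 \<le> (cnorm x)\<^sup>2 + (cnorm y)\<^sup>2 + 2 * (cnorm x * cnorm y)"
    unfolding cnorm_sq by linarith
  then have "(cnorm (x + y))\<^sup>2 \<le> (cnorm x + cnorm y)\<^sup>2"
    by (simp only: power2_sum)
  then show ?thesis by (rule power2_le_imp_le) simp
qed

lemma cnorm_triangle_diff: "cnorm (x - z) \<le> cnorm (x - y) + cnorm (y - (z::'a::complex_hilbert))"
  using cnorm_triangle[of "x - y" "y - z"] by simp

lemma cinner_tendsto_left:
  assumes "(\<lambda>n. cnorm (s n - (a::'a::complex_hilbert))) \<longlonglongrightarrow> 0"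
  shows "(\<lambda>n. cinner (s n) z) \<longlonglongrightarrow> cinner a z"
proof -
  have lim: "(\<lambda>n. cnorm (s n - a) * cnorm z) \<longlonglongrightarrow> 0"
    using tendsto_mult[OF assms tendsto_const[of "cnorm z"]] by simp
  have bound: "cmod (cinner (s n) z - cinner a z) \<le> cnorm (s n - a) * cnorm z" for n
    using cauchy_schwarz[of "s n - a" z] by (simp add: cinner_diff_left)
  have "(\<lambda>n. cinner (s n) z - cinner a z) \<longlonglongrightarrow> 0"
    by (intro tendsto_0_le[where K=1, OF lim] always_eventually) (simp add: bound)
  then show ?thesis by (simp add: LIM_zero_iff)
qed

section \<open>Orthonormal expansions\<close>

definition orthonormal :: "(nat \<Rightarrow> 'a::complex_hilbert) \<Rightarrow> bool" where
  "orthonormal e \<longleftrightarrow> (\<forall>n m. cinner (e n) (e m) = (if n = m then 1 else 0))"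

lemma ONB_orthonormal: "ONB e \<Longrightarrow> orthonormal e"
  by (simp add: ONB_def orthonormal_def)

lemma orthonormal_sum_cinner:
  assumes "orthonormal e" "finite A"
  shows "cinner (\<Sum>k\<in>A. c k *\<^sub>C e k) (e m) = (if m \<in> A then c m else 0)"
proof -
  have "cinner (\<Sum>k\<in>A. c k *\<^sub>C e k) (e m) = (\<Sum>k\<in>A. if k = m then c k else 0)"
    using assms(1)
    by (auto simp: cinner_sum_left cinner_scaleC_left orthonormal_def intro!: sum.cong)
  also have "\<dots> = (if m \<in> A then c m else 0)" using assms(2) by (simp add: sum.delta')
  finally show ?thesis .
qed

lemma cinner_sum_scaleC_right:
  "cinner x (\<Sum>k\<in>A. c k *\<^sub>C e k) = (\<Sum>k\<in>A. cnj (c k) * cinner x (e k))"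
  by (simp add: cinner_sum_right cinner_scaleC_right)

lemma orthonormal_sum_cnorm_sq:
  assumes "orthonormal e" "finite A"
  shows "(cnorm (\<Sum>k\<in>A. c k *\<^sub>C e k))\<^sup>2 = (\<Sum>k\<in>A. (cmod (c k))\<^sup>2)"
proof -
  have "cinner (\<Sum>k\<in>A. c k *\<^sub>C e k) (\<Sum>k\<in>A. c k *\<^sub>C e k)
        = (\<Sum>k\<in>A. complex_of_real ((cmod (c k))\<^sup>2))"
    unfolding cinner_sum_scaleC_right using assms
    by (intro sum.cong refl)
       (simp add: orthonormal_sum_cinner complex_norm_square mult.commute del: of_real_power)
  then show ?thesis unfolding cnorm_sq by (simp del: of_real_power)
qed

definition fourier_partial :: "(nat \<Rightarrow> 'a::complex_hilbert) \<Rightarrow> nat \<Rightarrow> 'a \<Rightarrow> 'a" where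
  "fourier_partial e n a = (\<Sum>k<n. cinner a (e k) *\<^sub>C e k)"

lemma fourier_partial_orthogonal:
  assumes "orthonormal e" "m < n"
  shows "cinner (a - fourier_partial e n a) (e m) = 0"
  using assms orthonormal_sum_cinner[OF assms(1) finite_lessThan, of "\<lambda>k. cinner a (e k)" n m]
  by (simp add: fourier_partial_def cinner_diff_left)

lemma fourier_partial_best_approx:
  assumes "orthonormal e"
  shows "cnorm (a - fourier_partial e n a) \<le> cnorm (a - (\<Sum>k<n. c k *\<^sub>C e k))"
proof -
  define u where "u = a - fourier_partial e n a"
  define w where "w = (\<Sum>k<n. (cinner a (e k) - c k) *\<^sub>C e k)"
  have uw: "cinner u w = 0"
    unfolding u_def w_def cinner_sum_scaleC_right using assms
    by (simp add: fourier_partial_orthogonal)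
  then have wu: "cinner w u = 0" using cinner_conj_sym[of w u] by simp
  have "a - (\<Sum>k<n. c k *\<^sub>C e k) = u + w"
    unfolding u_def w_def fourier_partial_def scaleC_diff_left sum_subtractf by simp
  then have "(cnorm (a - (\<Sum>k<n. c k *\<^sub>C e k)))\<^sup>2 = Re (cinner u u) + Re (cinner w w)"
    unfolding cnorm_sq by (simp add: cinner_add_left cinner_add_right uw wu)
  then have "(cnorm u)\<^sup>2 \<le> (cnorm (a - (\<Sum>k<n. c k *\<^sub>C e k)))\<^sup>2"
    using cinner_nonneg[of w] unfolding cnorm_sq by linarith
  then show ?thesis unfolding u_def by (rule power2_le_imp_le) simp
qed

lemma seq_span_eventually_prefix:
  assumes "y \<in> seq_span e"
  shows "\<exists>N. \<forall>n\<ge>N. \<exists>c. y = (\<Sum>k<n. c k *\<^sub>C e k)"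
proof -
  obtain F c where F: "finite F" "y = (\<Sum>i\<in>F. c i *\<^sub>C e i)"
    using assms unfolding seq_span_def by blast
  obtain N where N: "F \<subseteq> {..<N}"
    using F(1) finite_nat_set_iff_bounded by (auto simp: lessThan_def)
  have prefix: "y = (\<Sum>k<n. (if k \<in> F then c k else 0) *\<^sub>C e k)" if "n \<ge> N" for n
  proof -
    have "(\<Sum>k<n. (if k \<in> F then c k else 0) *\<^sub>C e k)
          = (\<Sum>k<n. if k \<in> F then c k *\<^sub>C e k else 0)"
      by (intro sum.cong) auto
    also have "\<dots> = (\<Sum>k\<in>{..<n} \<inter> F. c k *\<^sub>C e k)" by (simp add: sum.inter_restrict)
    also have "{..<n} \<inter> F = F" using N that by auto
    finally show ?thesis using F by simp
  qed
  show ?thesis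
    by (intro exI[of _ N] allI impI exI[of _ "\<lambda>k. if k \<in> F then c k else 0"]) (erule prefix)
qed

lemma fourier_partial_tendsto:
  assumes "ONB e"
  shows "(\<lambda>n. cnorm (fourier_partial e n a - a)) \<longlonglongrightarrow> 0"
proof (rule LIMSEQ_I)
  fix r :: real assume "r > 0"
  moreover have "a \<in> hclosure (seq_span e)" using assms by (simp add: ONB_def hdense_def)
  ultimately obtain y where y: "y \<in> seq_span e" "cnorm (a - y) < r"
    unfolding hclosure_def by blast
  obtain N where N: "\<forall>n\<ge>N. \<exists>c. y = (\<Sum>k<n. c k *\<^sub>C e k)"
    using seq_span_eventually_prefix[OF y(1)] by blast
  have "norm (cnorm (fourier_partial e n a - a) - 0) < r" if n: "n \<ge> N" for n
  proof -
    obtain c where c: "y = (\<Sum>k<n. c k *\<^sub>C e k)" using N n by blast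
    have "cnorm (a - fourier_partial e n a) \<le> cnorm (a - y)"
      unfolding c by (rule fourier_partial_best_approx[OF ONB_orthonormal[OF assms]])
    then show ?thesis using y(2) by (simp add: cnorm_minus_commute)
  qed
  then show "\<exists>N. \<forall>n\<ge>N. norm (cnorm (fourier_partial e n a - a) - 0) < r" by blast
qed

lemma parseval:
  assumes "ONB e"
  shows "(\<lambda>k. cinner a (e k) * cinner (e k) b) sums cinner a b"
proof -
  have "(\<lambda>n. cinner (fourier_partial e n a) b) \<longlonglongrightarrow> cinner a b"
    by (rule cinner_tendsto_left[OF fourier_partial_tendsto[OF assms]])
  moreover have "cinner (fourier_partial e n a) b = (\<Sum>k<n. cinner a (e k) * cinner (e k) b)" for n
    by (simp add: fourier_partial_def cinner_sum_left cinner_scaleC_left)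
  ultimately show ?thesis by (simp add: sums_def)
qed

lemma ONB_orthogonal_eq_0:
  assumes "ONB e" "\<And>m. cinner w (e m) = 0"
  shows "w = 0"
proof -
  have "(\<lambda>k. 0) sums cinner w w" using parseval[OF assms(1), of w w] assms(2) by simp
  then have "cinner w w = 0" using sums_unique2 sums_zero by blast
  then show ?thesis by (rule cinner_eq_zero)
qed

lemma orthonormal_series_converges:
  assumes "orthonormal e" "summable (\<lambda>k. (cmod (c k))\<^sup>2)"
  shows "\<exists>y. (\<lambda>n. cnorm ((\<Sum>k<n. c k *\<^sub>C e k) - y)) \<longlonglongrightarrow> 0"
proof -
  define X where "X n = (\<Sum>k<n. c k *\<^sub>C e k)" for n
  have tail: "(cnorm (X m - X n))\<^sup>2 = (\<Sum>k\<in>{n..<m}. (cmod (c k))\<^sup>2)" if "n \<le> m" for m n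
  proof -
    have "X m - X n = (\<Sum>k\<in>{n..<m}. c k *\<^sub>C e k)"
      unfolding X_def using that by (metis sum_diff_nat_ivl lessThan_atLeast0 zero_le)
    then show ?thesis using orthonormal_sum_cnorm_sq[OF assms(1)] by simp
  qed
  have "\<exists>N. \<forall>m\<ge>N. \<forall>n\<ge>N. cnorm (X m - X n) < r" if r: "r > 0" for r
  proof -
    obtain N where N: "\<forall>m\<ge>N. \<forall>n. norm (\<Sum>k\<in>{m..<n}. (cmod (c k))\<^sup>2) < r\<^sup>2"
      using assms(2) r unfolding summable_Cauchy by (meson zero_less_power)
    have "cnorm (X m - X n) < r" if "N \<le> n" "n \<le> m" for m n
    proof -
      have "(\<Sum>k\<in>{n..<m}. (cmod (c k))\<^sup>2) < r\<^sup>2"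
        using N that(1) by (metis abs_ge_self le_less_trans real_norm_def)
      then have "(cnorm (X m - X n))\<^sup>2 < r\<^sup>2" using tail[OF that(2)] by simp
      then show ?thesis using r by (simp add: power_less_imp_less_base)
    qed
    then show ?thesis by (metis cnorm_minus_commute nat_le_linear)
  qed
  then obtain L where "(\<lambda>n. cnorm (X n - L)) \<longlonglongrightarrow> 0"
    using hilbert_complete[of X] unfolding cnorm_def by blast
  then show ?thesis unfolding X_def by blast
qed

section \<open>Total sets\<close>

definition total_set :: "'a::complex_hilbert set \<Rightarrow> bool" where
  "total_set S \<longleftrightarrow> (\<forall>v. (\<forall>a\<in>S. cinner v a = 0) \<longrightarrow> v = 0)"

lemma total_set_mono: "total_set S \<Longrightarrow> S \<subseteq> S' \<Longrightarrow> total_set S'"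
  unfolding total_set_def by blast

lemma ONB_total_set: "ONB e \<Longrightarrow> total_set (range e)"
  unfolding total_set_def using ONB_orthogonal_eq_0 by blast

lemma hdense_mono: "hdense A \<Longrightarrow> A \<subseteq> B \<Longrightarrow> hdense B"
  unfolding hdense_def hclosure_def by blast

lemma hdense_orthogonal_eq_0:
  assumes "hdense D" "\<And>y. y \<in> D \<Longrightarrow> cinner v y = 0"
  shows "v = (0::'a::complex_hilbert)"
proof (rule ccontr)
  assume "v \<noteq> 0"
  then have n: "cnorm v > 0" using cnorm_nonneg[of v] cnorm_eq_0[of v] by linarith
  have "v \<in> hclosure D" using assms(1) by (simp add: hdense_def)
  then have "\<forall>e>0. \<exists>y\<in>D. cnorm (v - y) < e" unfolding hclosure_def by simp
  then obtain y where y: "y \<in> D" "cnorm (v - y) < cnorm v / 2" using n half_gt_zero by blast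
  have "cinner v v = cinner v (v - y)" using assms(2)[OF y(1)] by (simp add: cinner_diff_right)
  then have "(cnorm v)\<^sup>2 = Re (cinner v (v - y))" by (simp add: cnorm_sq)
  also have "\<dots> \<le> cmod (cinner v (v - y))" by (rule complex_Re_le_cmod)
  also have "\<dots> \<le> cnorm v * cnorm (v - y)" by (rule cauchy_schwarz)
  also have "\<dots> \<le> cnorm v * (cnorm v / 2)" using y n by (simp add: mult_left_mono)
  finally show False using n by (simp add: power2_eq_square)
qed

lemma hdense_total_set: "hdense D \<Longrightarrow> total_set D"
  unfolding total_set_def using hdense_orthogonal_eq_0 by blast

section \<open>Adjoints and closures of graphs\<close>

lemma adjointI: "(\<And>x w. (x, w) \<in> G \<Longrightarrow> cinner w y = cinner x z) \<Longrightarrow> (y, z) \<in> adjoint G"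
  unfolding adjoint_def by blast

lemma adjointD: "(y, z) \<in> adjoint G \<Longrightarrow> (x, w) \<in> G \<Longrightarrow> cinner w y = cinner x z"
  unfolding adjoint_def by blast

lemma adjoint_antimono: "G \<subseteq> H \<Longrightarrow> adjoint H \<subseteq> adjoint G"
  unfolding adjoint_def by blast

lemma adjoint_converse: "adjoint (converse G) = converse (adjoint G)"
proof (intro set_eqI iffI; clarify)
  fix y z assume yz: "(y, z) \<in> adjoint (converse G)"
  show "(z, y) \<in> adjoint G"
    by (rule adjointI) (use adjointD[OF yz] in auto)
next
  fix y z assume zy: "(z, y) \<in> adjoint G"
  show "(y, z) \<in> adjoint (converse G)"
    by (rule adjointI) (use adjointD[OF zy] in auto)
qed

lemma graph_closureI:
  "(\<And>r. r > 0 \<Longrightarrow> \<exists>u v. (u, v) \<in> G \<and> cnorm (x - u) < r \<and> cnorm (y - v) < r)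
   \<Longrightarrow> (x, y) \<in> graph_closure G"
  unfolding graph_closure_def by blast

lemma graph_closureD:
  "(x, y) \<in> graph_closure G \<Longrightarrow> r > 0
   \<Longrightarrow> \<exists>u v. (u, v) \<in> G \<and> cnorm (x - u) < r \<and> cnorm (y - v) < r"
  unfolding graph_closure_def by blast

lemma graph_closure_subset: "G \<subseteq> graph_closure G"
  unfolding graph_closure_def by force

lemma graph_closure_converse: "graph_closure (converse G) = converse (graph_closure G)"
  unfolding graph_closure_def by fastforce

lemma graph_closure_idem:
  "graph_closure (graph_closure G) = graph_closure (G::('a::complex_hilbert \<times> 'a) set)"
proof
  show "graph_closure (graph_closure G) \<subseteq> graph_closure G"
  proof clarify
    fix x y assume xy: "(x, y) \<in> graph_closure (graph_closure G)"
    show "(x, y) \<in> graph_closure G"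
    proof (rule graph_closureI)
      fix r :: real assume r: "r > 0"
      obtain u v where uv: "(u, v) \<in> graph_closure G" "cnorm (x - u) < r/2" "cnorm (y - v) < r/2"
        using graph_closureD[OF xy, of "r/2"] r by auto
      obtain u' v' where uv': "(u', v') \<in> G" "cnorm (u - u') < r/2" "cnorm (v - v') < r/2"
        using graph_closureD[OF uv(1), of "r/2"] r by auto
      have "cnorm (x - u') < r" using cnorm_triangle_diff[of x u' u] uv uv' by linarith
      moreover have "cnorm (y - v') < r" using cnorm_triangle_diff[of y v' v] uv uv' by linarith
      ultimately show "\<exists>u v. (u, v) \<in> G \<and> cnorm (x - u) < r \<and> cnorm (y - v) < r"
        using uv'(1) by blast
    qed
  qed
qed (rule graph_closure_subset)

lemma adjoint_graph_closure:
  "adjoint (graph_closure G) = adjoint (G::('a::complex_hilbert \<times> 'a) set)"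
proof
  show "adjoint (graph_closure G) \<subseteq> adjoint G"
    by (rule adjoint_antimono[OF graph_closure_subset])
next
  show "adjoint G \<subseteq> adjoint (graph_closure G)"
  proof clarify
    fix a b assume ab: "(a, b) \<in> adjoint G"
    show "(a, b) \<in> adjoint (graph_closure G)"
    proof (rule adjointI, rule ccontr)
      fix x w assume xw: "(x, w) \<in> graph_closure G" and ne: "cinner w a \<noteq> cinner x b"
      define d where "d = cinner w a - cinner x b"
      define K where "K = cnorm a + cnorm b + 1"
      define r where "r = cmod d / K"
      have d: "cmod d > 0" using ne by (simp add: d_def)
      have K: "K > 0" by (simp add: K_def add_nonneg_pos)
      have r: "r > 0" using d K by (simp add: r_def)
      obtain u v where uv: "(u, v) \<in> G" "cnorm (x - u) < r" "cnorm (w - v) < r"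
        using graph_closureD[OF xw r] by blast
      have "d = cinner (w - v) a - cinner (x - u) b"
        using adjointD[OF ab uv(1)] by (simp add: d_def cinner_diff_left)
      then have "cmod d \<le> cmod (cinner (w - v) a) + cmod (cinner (x - u) b)"
        by (metis norm_triangle_ineq4)
      also have "\<dots> \<le> cnorm (w - v) * cnorm a + cnorm (x - u) * cnorm b"
        by (intro add_mono cauchy_schwarz)
      also have "\<dots> \<le> r * cnorm a + r * cnorm b"
        using uv by (intro add_mono mult_right_mono) auto
      also have "\<dots> < r * K" using r by (simp add: K_def algebra_simps)
      also have "\<dots> = cmod d" using K by (simp add: r_def)
      finally show False by simp
    qed
  qed
qed

lemma graph_closure_add:
  assumes "is_operator G" "(x, y) \<in> graph_closure G" "(u, v) \<in> graph_closure G"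
  shows "(x + u, y + v) \<in> graph_closure (G::('a::complex_hilbert \<times> 'a) set)"
proof (rule graph_closureI)
  fix r :: real assume r: "r > 0"
  obtain x' y' where 1: "(x', y') \<in> G" "cnorm (x - x') < r/2" "cnorm (y - y') < r/2"
    using graph_closureD[OF assms(2), of "r/2"] r by auto
  obtain u' v' where 2: "(u', v') \<in> G" "cnorm (u - u') < r/2" "cnorm (v - v') < r/2"
    using graph_closureD[OF assms(3), of "r/2"] r by auto
  have "(x' + u', y' + v') \<in> G" using assms(1) 1(1) 2(1) by (simp add: is_operator_def)
  moreover have "cnorm (x + u - (x' + u')) < r"
    using cnorm_triangle[of "x - x'" "u - u'"] 1 2 by (simp add: algebra_simps)
  moreover have "cnorm (y + v - (y' + v')) < r"
    using cnorm_triangle[of "y - y'" "v - v'"] 1 2 by (simp add: algebra_simps)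
  ultimately show "\<exists>p q. (p, q) \<in> G \<and> cnorm (x + u - p) < r \<and> cnorm (y + v - q) < r"
    by blast
qed

lemma graph_closure_scaleC:
  assumes "is_operator G" "(x, y) \<in> graph_closure G"
  shows "(a *\<^sub>C x, a *\<^sub>C y) \<in> graph_closure (G::('a::complex_hilbert \<times> 'a) set)"
proof (rule graph_closureI)
  fix r :: real assume r: "r > 0"
  define r' where "r' = r / (cmod a + 1)"
  have r': "r' > 0" using r by (simp add: r'_def add_nonneg_pos)
  obtain x' y' where 1: "(x', y') \<in> G" "cnorm (x - x') < r'" "cnorm (y - y') < r'"
    using graph_closureD[OF assms(2) r'] by blast
  have bound: "cnorm (a *\<^sub>C p - a *\<^sub>C q) < r" if "cnorm (p - q) < r'" for p q
  proof -
    have "cnorm (a *\<^sub>C p - a *\<^sub>C q) = cmod a * cnorm (p - q)"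
      by (simp add: scaleC_diff_right[symmetric] cnorm_scaleC)
    also have "\<dots> \<le> cmod a * r'" using that by (simp add: mult_left_mono)
    also have "\<dots> < (cmod a + 1) * r'" using r' by (simp add: algebra_simps)
    also have "\<dots> = r"
    proof -
      have "cmod a + 1 \<noteq> 0" using norm_ge_zero[of a] by linarith
      then show ?thesis by (simp add: r'_def)
    qed
    finally show ?thesis .
  qed
  have "(a *\<^sub>C x', a *\<^sub>C y') \<in> G" using assms(1) 1(1) by (simp add: is_operator_def)
  moreover have "cnorm (a *\<^sub>C x - a *\<^sub>C x') < r" "cnorm (a *\<^sub>C y - a *\<^sub>C y') < r"
    using bound 1 by auto
  ultimately show "\<exists>p q. (p, q) \<in> G \<and> cnorm (a *\<^sub>C x - p) < r \<and> cnorm (a *\<^sub>C y - q) < r"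
    by blast
qed

lemma total_adjoint_Domain_imp_single_valued:
  assumes "total_set (Domain (adjoint G))" "(x, y) \<in> G" "(x, z) \<in> G"
  shows "y = (z::'a::complex_hilbert)"
proof -
  have "cinner (y - z) a = 0" if "(a, b) \<in> adjoint G" for a b
    using adjointD[OF that assms(2)] adjointD[OF that assms(3)] by (simp add: cinner_diff_left)
  then have "\<forall>a\<in>Domain (adjoint G). cinner (y - z) a = 0" by blast
  then have "y - z = 0" using assms(1) unfolding total_set_def by blast
  then show ?thesis by simp
qed

lemma total_adjoint_Range_imp_injective:
  assumes "total_set (Range (adjoint G))" "(x, w) \<in> G" "(x', w) \<in> G"
  shows "x = (x'::'a::complex_hilbert)"
proof -
  have "cinner (x - x') b = 0" if "(a, b) \<in> adjoint G" for a b
    using adjointD[OF that assms(2)] adjointD[OF that assms(3)] by (simp add: cinner_diff_left)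
  then have "\<forall>b\<in>Range (adjoint G). cinner (x - x') b = 0" by blast
  then have "x - x' = 0" using assms(1) unfolding total_set_def by blast
  then show ?thesis by simp
qed

lemma zero_in_graph_closure: "is_operator G \<Longrightarrow> (0, 0) \<in> graph_closure G"
  using graph_closure_subset unfolding is_operator_def by blast

lemma is_operator_graph_closure:
  assumes "is_operator G" "total_set (Domain (adjoint G))"
  shows "is_operator (graph_closure G)"
proof -
  have "total_set (Domain (adjoint (graph_closure G)))"
    using assms(2) by (simp add: adjoint_graph_closure)
  then have "y = z" if "(x, y) \<in> graph_closure G" "(x, z) \<in> graph_closure G" for x y z
    using total_adjoint_Domain_imp_single_valued that by blast
  then show ?thesis unfolding is_operator_def
    using zero_in_graph_closure graph_closure_add graph_closure_scaleC assms(1) by blast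
qed

lemma is_operator_converse_graph_closure:
  assumes "is_operator G" "total_set (Range (adjoint G))"
  shows "is_operator (converse (graph_closure G))"
proof -
  have "total_set (Range (adjoint (graph_closure G)))"
    using assms(2) by (simp add: adjoint_graph_closure)
  then have "x = x'" if "(x, y) \<in> graph_closure G" "(x', y) \<in> graph_closure G" for x x' y
    using total_adjoint_Range_imp_injective that by blast
  then show ?thesis unfolding is_operator_def
    using zero_in_graph_closure graph_closure_add graph_closure_scaleC assms(1) by blast
qed

lemma closed_operator_converse_graph_closure:
  "is_operator (converse (graph_closure G))
   \<Longrightarrow> closed_operator (converse (graph_closure (G::('a::complex_hilbert \<times> 'a) set)))"
  unfolding closed_operator_def by (simp add: graph_closure_converse[symmetric] graph_closure_idem)

lemma csubspace_Range: "is_operator G \<Longrightarrow> csubspace (Range G)"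
  unfolding is_operator_def csubspace_def by blast

lemma seq_span_base: "f n \<in> seq_span f"
  unfolding seq_span_def by (intro CollectI exI[of _ "{n}"] exI[of _ "\<lambda>_. 1"]) (simp add: scaleC_one)

lemma seq_span_subset:
  assumes "csubspace S" "\<And>n. f n \<in> S"
  shows "seq_span f \<subseteq> S"
proof
  fix y assume "y \<in> seq_span f"
  then obtain F c where F: "finite F" "y = (\<Sum>i\<in>F. c i *\<^sub>C f i)" unfolding seq_span_def by blast
  have "(\<Sum>i\<in>F. c i *\<^sub>C f i) \<in> S" using F(1)
    by (induction F rule: finite_induct) (use assms in \<open>auto simp: csubspace_def\<close>)
  then show "y \<in> S" using F(2) by simp
qed

section \<open>The operators \<open>T\<^sub>e\<^sub>,\<^sub>f\<close>\<close>

lemma T_seq_cinner: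
  assumes "orthonormal e" "(x, y) \<in> T_seq e f"
  shows "cinner y (e m) = cinner x (f m)"
proof -
  have "(\<lambda>n. cinner (\<Sum>k<n. cinner x (f k) *\<^sub>C e k) (e m)) \<longlonglongrightarrow> cinner y (e m)"
    using assms(2) unfolding T_seq_def by (auto intro: cinner_tendsto_left)
  moreover have "\<forall>\<^sub>F n in sequentially. cinner (\<Sum>k<n. cinner x (f k) *\<^sub>C e k) (e m) = cinner x (f m)"
    unfolding eventually_sequentially
    by (rule exI[of _ "Suc m"]) (simp add: orthonormal_sum_cinner[OF assms(1)])
  then have "(\<lambda>n. cinner (\<Sum>k<n. cinner x (f k) *\<^sub>C e k) (e m)) \<longlonglongrightarrow> cinner x (f m)"
    by (rule tendsto_eventually)
  ultimately show ?thesis using LIMSEQ_unique by blast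
qed

lemma T_seq_exists:
  assumes "orthonormal e" "x \<in> seq_dom f"
  shows "\<exists>y. (x, y) \<in> T_seq e f"
  using orthonormal_series_converges[OF assms(1), of "\<lambda>k. cinner x (f k)"] assms(2)
  unfolding T_seq_def seq_dom_def by blast

lemma T_seq_iff:
  assumes "ONB e"
  shows "(x, y) \<in> T_seq e f \<longleftrightarrow> x \<in> seq_dom f \<and> (\<forall>m. cinner y (e m) = cinner x (f m))"
proof
  assume "(x, y) \<in> T_seq e f"
  then show "x \<in> seq_dom f \<and> (\<forall>m. cinner y (e m) = cinner x (f m))"
    using T_seq_cinner[OF ONB_orthonormal[OF assms]] unfolding T_seq_def by blast
next
  assume x: "x \<in> seq_dom f \<and> (\<forall>m. cinner y (e m) = cinner x (f m))"
  then obtain y' where y': "(x, y') \<in> T_seq e f"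
    using T_seq_exists[OF ONB_orthonormal[OF assms]] by blast
  have "y - y' = 0"
  proof (rule ONB_orthogonal_eq_0[OF assms])
    fix m show "cinner (y - y') (e m) = 0"
      using x T_seq_cinner[OF ONB_orthonormal[OF assms] y'] by (simp add: cinner_diff_left)
  qed
  then show "(x, y) \<in> T_seq e f" using y' by simp
qed

lemma is_operator_restrict_T_seq:
  assumes e: "ONB e" and D: "csubspace D" "D \<subseteq> seq_dom f"
  shows "is_operator (restrict_op (T_seq e f) D)"
proof -
  let ?S = "restrict_op (T_seq e f) D"
  have S: "(x, y) \<in> ?S \<longleftrightarrow> x \<in> D \<and> (\<forall>m. cinner y (e m) = cinner x (f m))" for x y
    using D(2) by (auto simp: restrict_op_def T_seq_iff[OF e])
  have "y = z" if "(x, y) \<in> ?S" "(x, z) \<in> ?S" for x y z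
  proof -
    have "y - z = 0"
      using that by (intro ONB_orthogonal_eq_0[OF e]) (simp add: S cinner_diff_left)
    then show ?thesis by simp
  qed
  moreover have "(0, 0) \<in> ?S" using D(1) by (simp add: S csubspace_def)
  moreover have "(x + u, y + v) \<in> ?S" if "(x, y) \<in> ?S" "(u, v) \<in> ?S" for x y u v
    using that D(1) by (simp add: S csubspace_def cinner_add_left)
  moreover have "(a *\<^sub>C x, a *\<^sub>C y) \<in> ?S" if "(x, y) \<in> ?S" for a x y
    using that D(1) by (simp add: S csubspace_def cinner_scaleC_left)
  ultimately show ?thesis unfolding is_operator_def by blast
qed

lemma T_seq_adjoint: "orthonormal e \<Longrightarrow> (e m, f m) \<in> adjoint (T_seq e f)"
  by (rule adjointI) (rule T_seq_cinner)

section \<open>Quasi bases and natural constructing pairs\<close>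

lemma quasi_basis_sym: "quasi_basis D \<phi> \<psi> \<Longrightarrow> quasi_basis D \<psi> \<phi>"
  unfolding quasi_basis_def
proof (intro ballI)
  fix x y assume qb: "\<forall>x\<in>D. \<forall>y\<in>D. (\<lambda>k. cinner x (\<phi> k) * cinner (\<psi> k) y) sums cinner x y"
    and xy: "x \<in> D" "y \<in> D"
  then have "(\<lambda>k. cinner y (\<phi> k) * cinner (\<psi> k) x) sums cinner y x" by blast
  then have "(\<lambda>k. cnj (cinner y (\<phi> k) * cinner (\<psi> k) x)) sums cnj (cinner y x)"
    by (simp only: sums_cnj)
  moreover have "cnj (cinner y (\<phi> k) * cinner (\<psi> k) x) = cinner x (\<psi> k) * cinner (\<phi> k) y" for k
    by (simp add: cinner_conj_sym[of y] cinner_conj_sym[of "\<psi> k"])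
  moreover have "cnj (cinner y x) = cinner x y" by (simp add: cinner_conj_sym[of y])
  ultimately show "(\<lambda>k. cinner x (\<psi> k) * cinner (\<phi> k) y) sums cinner x y" by simp
qed

lemma biorthogonal_sym: "biorthogonal \<phi> \<psi> \<Longrightarrow> biorthogonal \<psi> \<phi>"
  unfolding biorthogonal_def by (metis cinner_conj_sym complex_cnj_one complex_cnj_zero)

lemma quasi_basis_if_natural_pair:
  assumes e: "ONB e" and nat: "natural_pair e T \<phi> \<psi>"
    and D: "D \<subseteq> Domain (adjoint T) \<inter> Range T"
  shows "quasi_basis D \<phi> \<psi>"
  unfolding quasi_basis_def
proof (intro ballI)
  fix x y assume "x \<in> D" "y \<in> D"
  then obtain z w where z: "(x, z) \<in> adjoint T" and w: "(w, y) \<in> T" using D by blast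
  have Te: "(e k, \<phi> k) \<in> T" and Ae: "(e k, \<psi> k) \<in> adjoint (converse T)" for k
    using nat by (auto simp: natural_pair_def constructing_pair_def)
  have "cinner x (\<phi> k) = cinner z (e k)" for k
    using adjointD[OF z Te[of k]] by (metis cinner_conj_sym)
  moreover have "cinner (\<psi> k) y = cinner (e k) w" for k
    using adjointD[OF Ae[of k], of y w] w by (metis cinner_conj_sym converse_iff)
  moreover have "cinner x y = cinner z w"
    using adjointD[OF z w] by (metis cinner_conj_sym)
  ultimately show "(\<lambda>k. cinner x (\<phi> k) * cinner (\<psi> k) y) sums cinner x y"
    using parseval[OF e, of z w] by simp
qed

lemma natural_pair_converse_graph_closure:
  assumes e: "ONB e" and S: "is_operator S" "hdense (Domain S)"
    and S_\<phi>: "\<And>n. (\<phi> n, e n) \<in> S" and adj_e: "\<And>n. (e n, \<psi> n) \<in> adjoint S"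
    and total: "total_set (Range (adjoint S))"
  shows "natural_pair e (converse (graph_closure S)) \<phi> \<psi>"
proof -
  have "range e \<subseteq> Domain (adjoint S)" using adj_e by blast
  then have "is_operator (graph_closure S)"
    using is_operator_graph_closure[OF S(1)] total_set_mono[OF ONB_total_set[OF e]] by blast
  moreover have "is_operator (converse (graph_closure S))"
    using is_operator_converse_graph_closure[OF S(1) total] .
  moreover have "seq_span e \<subseteq> Range (graph_closure S)"
    using S_\<phi> graph_closure_subset
    by (intro seq_span_subset csubspace_Range calculation(1)) blast
  then have "hdense (Domain (converse (graph_closure S)))"
    using e hdense_mono by (auto simp: ONB_def)
  moreover have "hdense (Domain (graph_closure S))"
    using S(2) graph_closure_subset hdense_mono by (metis Domain_mono)
  moreover have "(\<phi> n, e n) \<in> graph_closure S" for n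
    using S_\<phi> graph_closure_subset by blast
  ultimately show ?thesis
    unfolding natural_pair_def constructing_pair_def densely_defined_def
    using e closed_operator_converse_graph_closure adj_e by (auto simp: adjoint_graph_closure)
qed

lemma restrict_T_seq_quasi_basis_adjoint:
  assumes e: "ONB e" and qb: "quasi_basis D \<phi> \<psi>" and D: "D \<subseteq> seq_dom \<phi>"
    and y: "y \<in> D" and yz: "(y, z) \<in> T_seq e \<phi>"
  shows "(z, y) \<in> adjoint (restrict_op (T_seq e \<psi>) D)"
proof (rule adjointI)
  fix x w assume "(x, w) \<in> restrict_op (T_seq e \<psi>) D"
  then have x: "x \<in> D" and xw: "\<And>k. cinner w (e k) = cinner x (\<psi> k)"
    by (auto simp: restrict_op_def T_seq_iff[OF e])
  have "cinner (e k) z = cinner (\<phi> k) y" for k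
    using yz by (simp add: T_seq_iff[OF e] cinner_conj_sym[of "e k"] cinner_conj_sym[of "\<phi> k"])
  then have "(\<lambda>k. cinner x (\<psi> k) * cinner (\<phi> k) y) sums cinner w z"
    using parseval[OF e, of w z] xw by simp
  moreover have "(\<lambda>k. cinner x (\<psi> k) * cinner (\<phi> k) y) sums cinner x y"
    using quasi_basis_sym[OF qb] x y unfolding quasi_basis_def by blast
  ultimately show "cinner w z = cinner x y" by (rule sums_unique2)
qed

lemma natural_pair_inverse_closure_restrict_T_seq:
  assumes e: "ONB e" and qb: "quasi_basis D \<phi> \<psi>" and bio: "biorthogonal \<phi> \<psi>"
    and sub: "csubspace D" and dense: "hdense D"
    and span: "seq_span \<phi> \<subseteq> D" and dom: "D \<subseteq> seq_dom \<phi> \<inter> seq_dom \<psi>"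
  shows "let T = converse (graph_closure (restrict_op (T_seq e \<psi>) D))
         in natural_pair e T \<phi> \<psi> \<and> D \<subseteq> Domain (adjoint T) \<inter> Range T"
proof -
  define S where "S = restrict_op (T_seq e \<psi>) D"
  have S: "(x, y) \<in> S \<longleftrightarrow> x \<in> D \<and> (\<forall>m. cinner y (e m) = cinner x (\<psi> m))" for x y
    using dom by (auto simp: S_def restrict_op_def T_seq_iff[OF e])
  have op: "is_operator S"
    unfolding S_def using is_operator_restrict_T_seq e sub dom by blast
  have Dom: "D \<subseteq> Domain S"
    using T_seq_exists[OF ONB_orthonormal[OF e]] dom by (force simp: S_def restrict_op_def)
  have S_\<phi>: "(\<phi> n, e n) \<in> S" for n
    using seq_span_base[of \<phi> n] span e bio by (auto simp: S ONB_def biorthogonal_def)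
  have adj_e: "(e n, \<psi> n) \<in> adjoint S" for n
    using adjoint_antimono[of S "T_seq e \<psi>"] T_seq_adjoint[OF ONB_orthonormal[OF e]]
    by (auto simp: S_def restrict_op_def)
  have Ran: "D \<subseteq> Range (adjoint S)"
  proof
    fix y assume y: "y \<in> D"
    then obtain z where "(y, z) \<in> T_seq e \<phi>"
      using T_seq_exists[OF ONB_orthonormal[OF e]] dom by blast
    then show "y \<in> Range (adjoint S)"
      using restrict_T_seq_quasi_basis_adjoint[OF e qb _ y] dom by (auto simp: S_def)
  qed
  have "natural_pair e (converse (graph_closure S)) \<phi> \<psi>"
    using natural_pair_converse_graph_closure[OF e op hdense_mono[OF dense Dom] S_\<phi> adj_e]
      total_set_mono[OF hdense_total_set[OF dense] Ran] by blast
  moreover have "D \<subseteq> Domain (adjoint (converse (graph_closure S)))"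
    using Ran by (simp add: adjoint_converse adjoint_graph_closure)
  moreover have "D \<subseteq> Range (converse (graph_closure S))"
    using Dom Domain_mono[OF graph_closure_subset, of S] by simp
  ultimately show ?thesis by (simp add: S_def Let_def)
qed

lemma quasi_basis_iff_natural_pairs:
  fixes \<phi> \<psi> :: "nat \<Rightarrow> 'a::complex_hilbert"
  assumes separable: "\<exists>e::nat \<Rightarrow> 'a. ONB e" and bio: "biorthogonal \<phi> \<psi>"
    and sub: "csubspace D" and dense: "hdense D"
    and span: "seq_span \<phi> \<subseteq> D" and dom: "D \<subseteq> seq_dom \<phi> \<inter> seq_dom \<psi>"
  shows "quasi_basis D \<phi> \<psi> \<longleftrightarrow>
           (\<forall>e. ONB e \<longrightarrow> (\<exists>T. natural_pair e T \<phi> \<psi> \<and> D \<subseteq> Domain (adjoint T) \<inter> Range T))"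
proof
  assume "quasi_basis D \<phi> \<psi>"
  then show "\<forall>e. ONB e \<longrightarrow> (\<exists>T. natural_pair e T \<phi> \<psi> \<and> D \<subseteq> Domain (adjoint T) \<inter> Range T)"
    using natural_pair_inverse_closure_restrict_T_seq[OF _ _ bio sub dense span dom]
    unfolding Let_def by blast
next
  assume "\<forall>e. ONB e \<longrightarrow> (\<exists>T. natural_pair e T \<phi> \<psi> \<and> D \<subseteq> Domain (adjoint T) \<inter> Range T)"
  then show "quasi_basis D \<phi> \<psi>"
    using separable quasi_basis_if_natural_pair by blast
qed

theorem corollary3p3:
  fixes \<phi> \<psi> :: "nat \<Rightarrow> 'a::complex_hilbert" and D :: "'a set"
  assumes separable: "\<exists>e::nat \<Rightarrow> 'a. ONB e"
    and bio: "biorthogonal \<phi> \<psi>"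
    and sub: "csubspace D" and dense: "hdense D"
    and incl1: "seq_span \<phi> \<union> seq_span \<psi> \<subseteq> D"
    and incl2: "D \<subseteq> seq_dom \<phi> \<inter> seq_dom \<psi>"
  shows "(quasi_basis D \<phi> \<psi> \<longleftrightarrow>
            (\<forall>e. ONB e \<longrightarrow> (\<exists>T. natural_pair e T \<phi> \<psi> \<and>
                                   D \<subseteq> Domain (adjoint T) \<inter> Range T)))
       \<and> (quasi_basis D \<phi> \<psi> \<longleftrightarrow>
            (\<forall>e. ONB e \<longrightarrow> (\<exists>K. natural_pair e K \<psi> \<phi> \<and>
                                   D \<subseteq> Domain (adjoint K) \<inter> Range K)))
       \<and> (quasi_basis D \<phi> \<psi> \<longrightarrow>
            (\<forall>e. ONB e \<longrightarrow>
               (let T = converse (graph_closure (restrict_op (T_seq e \<psi>) D))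
                in natural_pair e T \<phi> \<psi> \<and> D \<subseteq> Domain (adjoint T) \<inter> Range T)
             \<and> (let K = converse (graph_closure (restrict_op (T_seq e \<phi>) D))
                in natural_pair e K \<psi> \<phi> \<and> D \<subseteq> Domain (adjoint K) \<inter> Range K)))"
proof -
  have bio': "biorthogonal \<psi> \<phi>" using bio by (rule biorthogonal_sym)
  have span: "seq_span \<phi> \<subseteq> D" and span': "seq_span \<psi> \<subseteq> D" using incl1 by auto
  have dom': "D \<subseteq> seq_dom \<psi> \<inter> seq_dom \<phi>" using incl2 by blast
  have sym: "quasi_basis D \<psi> \<phi> \<longleftrightarrow> quasi_basis D \<phi> \<psi>" using quasi_basis_sym by blast
  note T = natural_pair_inverse_closure_restrict_T_seq[OF _ _ bio sub dense span incl2]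
  note K = natural_pair_inverse_closure_restrict_T_seq[OF _ _ bio' sub dense span' dom']
  show ?thesis
    using quasi_basis_iff_natural_pairs[OF separable bio sub dense span incl2]
      quasi_basis_iff_natural_pairs[OF separable bio' sub dense span' dom']
      T K unfolding sym by blast
qed

end
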